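(* Let $n$ be an integer with $|n|\ne 1$, $n\neq 0$, and let $\{a,b,c,d\}$ be a set of positive integers with the property $D(n)$ such that $n^2\le a<b<c<d$. Then $c>3.88\,a$ and $d>4.89\,c$.
   Context: A set of positive integers $S$ has the property $D(n)$ if $xy+n$ is a perfect square for all distinct $x,y\in S$. *)

theory Defs
  imports Complex_Main
begin

definition is_square :: "int \<Rightarrow> bool" where
  "is_square m \<longleftrightarrow> (\<exists>k::int. m = k ^ 2)"

definition has_property_D :: "int \<Rightarrow> int set \<Rightarrow> bool" where
  "has_property_D n S \<longleftrightarrow> (\<forall>x\<in>S. x > 0) \<and>
     (\<forall>x\<in>S. \<forall>y\<in>S. x \<noteq> y \<longrightarrow> is_square (x * y + n))"

end

(*
  Let {x, y, z} be a D(n)-triple with n\<^sup>2 \<le> x < y < z and let r, s, t be the roots of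
  xy + n, xz + n, yz + n. The integer e = n(x + y + z) + 2xyz - 2rst satisfies
  y e + n\<^sup>2 = (ys - rt)\<^sup>2 and e (e + 4rst) = n\<^sup>2 ((z - x - y)\<^sup>2 - 4r\<^sup>2). Hence e \<ge> 0, and
  either e = 0, so that z = x + y + 2r is the regular extension of {x, y}, or e \<ge> 1 and
  4rst < x (z - x - y)\<^sup>2; since rst is roughly at least xy (z - y), the latter forces z > 5y
  once y \<ge> 4 (guaranteed by |n| \<noteq> 1, which gives a \<ge> n\<^sup>2 \<ge> 4).
  For {a, b, c} either alternative gives c > 4a. And d cannot be the regular extension of
  both {a, c} and {b, c}, so {a, c, d} or {b, c, d} is far, whence d > 5c.
*)
theory Submission
  imports Defs
begin

lemma has_property_D_subset:
  assumes "has_property_D n S" and "T \<subseteq> S"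
  shows "has_property_D n T"
  using assms unfolding has_property_D_def by blast

lemma has_property_D_root:
  assumes "has_property_D n S" and "x \<in> S" and "y \<in> S" and "x \<noteq> y"
  obtains r where "0 \<le> r" and "r\<^sup>2 = x * y + n"
proof -
  obtain k where "x * y + n = k\<^sup>2"
    using assms unfolding has_property_D_def is_square_def by blast
  then show ?thesis by (intro that[of "\<bar>k\<bar>"]) simp_all
qed

lemma abs_le_of_power2_le:
  fixes n x :: int
  assumes "n \<noteq> 0" and "n\<^sup>2 \<le> x"
  shows "\<bar>n\<bar> \<le> x"
proof -
  have "\<bar>n\<bar> \<le> \<bar>n\<bar>\<^sup>2" using assms(1) by (intro self_le_power) auto
  then show ?thesis using assms(2) by simp
qed

lemma shifted_product_root_ge:
  fixes n x y z r :: int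
  assumes "0 < x" and "x \<le> y" and "x < z" and "\<bar>n\<bar> \<le> x"
    and "0 \<le> r" and "r\<^sup>2 = y * z + n"
  shows "x \<le> r"
proof (rule power2_le_imp_le)
  have "x * (x + 1) \<le> y * z" using assms(1-3) by (intro mult_mono) auto
  then show "x\<^sup>2 \<le> r\<^sup>2" using assms(4,6) by (simp add: power2_eq_square algebra_simps)
qed fact

text \<open>Dujella's quantity e of a D(n)-triple; it vanishes exactly for z = x + y \<plusminus> 2r.\<close>
definition triple_defect :: "int \<Rightarrow> int \<Rightarrow> int \<Rightarrow> int \<Rightarrow> int \<Rightarrow> int \<Rightarrow> int \<Rightarrow> int" where
  "triple_defect n x y z r s t = n * (x + y + z) + 2 * x * y * z - 2 * r * s * t"

context
  fixes n x y z r s t :: int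
  assumes r: "r\<^sup>2 = x * y + n" and s: "s\<^sup>2 = x * z + n" and t: "t\<^sup>2 = y * z + n"
begin

lemma triple_defect_square_identity:
  "y * triple_defect n x y z r s t + n\<^sup>2 = (y * s - r * t)\<^sup>2"
proof -
  have "(y * s - r * t)\<^sup>2 = y\<^sup>2 * s\<^sup>2 - 2 * y * (r * s * t) + r\<^sup>2 * t\<^sup>2" by algebra
  also have "\<dots> = y * triple_defect n x y z r s t + n\<^sup>2"
    unfolding r s t triple_defect_def by algebra
  finally show ?thesis ..
qed

lemma triple_defect_mult_identity:
  "triple_defect n x y z r s t * (triple_defect n x y z r s t + 4 * r * s * t)
    = n\<^sup>2 * ((z - x - y)\<^sup>2 - 4 * r\<^sup>2)"
proof -
  have rst: "(r * s * t)\<^sup>2 = (x * y + n) * (x * z + n) * (y * z + n)"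
    unfolding r [symmetric] s [symmetric] t [symmetric] by algebra
  have "triple_defect n x y z r s t * (triple_defect n x y z r s t + 4 * r * s * t)
      = (n * (x + y + z) + 2 * x * y * z)\<^sup>2 - 4 * (r * s * t)\<^sup>2"
    unfolding triple_defect_def by algebra
  also have "\<dots> = n\<^sup>2 * ((z - x - y)\<^sup>2 - 4 * r\<^sup>2)"
    unfolding rst r by algebra
  finally show ?thesis .
qed

lemma triple_defect_nonneg:
  assumes "n\<^sup>2 < y"
  shows "0 \<le> triple_defect n x y z r s t"
proof (rule ccontr)
  assume "\<not> 0 \<le> triple_defect n x y z r s t"
  then have "y * triple_defect n x y z r s t \<le> y * - 1"
    using assms zero_le_power2 [of n] by (intro mult_left_mono) linarith+
  then show False
    using triple_defect_square_identity assms zero_le_power2 [of "y * s - r * t"] by linarith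
qed

lemma triple_defect_eq_0:
  assumes "n \<noteq> 0" and "triple_defect n x y z r s t = 0"
  shows "(z - x - y)\<^sup>2 = (2 * r)\<^sup>2"
  using triple_defect_mult_identity assms by (simp add: power_mult_distrib)

lemma triple_defect_pos:
  assumes "0 < triple_defect n x y z r s t" and "0 \<le> r * s * t"
  shows "4 * r * s * t < n\<^sup>2 * ((z - x - y)\<^sup>2 - 4 * r\<^sup>2)"
proof -
  let ?e = "triple_defect n x y z r s t"
  have "?e + 4 * r * s * t \<le> ?e * (?e + 4 * r * s * t)"
    using assms by (simp add: mult_le_cancel_right1)
  then show ?thesis using triple_defect_mult_identity assms(1) by linarith
qed

end

lemma gap_square_le:
  fixes y z :: int
  assumes "4 \<le> y" and "y < z" and "z \<le> 5 * y"
  shows "y * (z - y)\<^sup>2 \<le> (y - 1) * (z - 1)\<^sup>2"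
proof -
  define v where "v = y - 1"
  have "z - y \<le> 2 * v\<^sup>2"
  proof -
    have "(v - 3) * (v + 1) \<ge> 0" using assms(1) unfolding v_def by simp
    then show ?thesis using assms(3) unfolding v_def by (simp add: power2_eq_square algebra_simps)
  qed
  then have "(z - y) * (z - y) \<le> 2 * v\<^sup>2 * (z - y)" using assms(2) by (intro mult_right_mono) auto
  moreover have "0 \<le> v ^ 3" using assms(1) unfolding v_def by simp
  moreover have "(y - 1) * (z - 1)\<^sup>2 - y * (z - y)\<^sup>2 = 2 * v\<^sup>2 * (z - y) + v ^ 3 - (z - y) * (z - y)"
    unfolding v_def by algebra
  ultimately show ?thesis by linarith
qed

lemma root_product_ge:
  fixes n x y z r s t :: int
  assumes "\<bar>n\<bar> \<le> x" and "0 < x" and "x < y" and "y < z"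
    and "0 \<le> r" and "0 \<le> s" and "0 \<le> t"
    and r: "r\<^sup>2 = x * y + n" and s: "s\<^sup>2 = x * z + n" and t: "t\<^sup>2 = y * z + n"
    and gap: "y * (z - y)\<^sup>2 \<le> (y - 1) * (z - 1)\<^sup>2"
  shows "x * y * (z - y) \<le> r * s * t"
proof (rule power2_le_imp_le)
  have "x * (y - 1) \<le> r\<^sup>2" and "x * (z - 1) \<le> s\<^sup>2" and "y * (z - 1) \<le> t\<^sup>2"
    using assms(1,3) r s t by (simp_all add: algebra_simps)
  then have "(x * (y - 1)) * (x * (z - 1)) * (y * (z - 1)) \<le> r\<^sup>2 * s\<^sup>2 * t\<^sup>2"
    using assms(2-4) by (intro mult_mono) auto
  moreover have "(x * y * (z - y))\<^sup>2 \<le> (x\<^sup>2 * y) * ((y - 1) * (z - 1)\<^sup>2)"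
    using mult_left_mono [OF gap, of "x\<^sup>2 * y"] assms(2,3) by (simp add: power2_eq_square algebra_simps)
  ultimately show "(x * y * (z - y))\<^sup>2 \<le> (r * s * t)\<^sup>2"
    by (simp add: power2_eq_square algebra_simps)
qed (use assms(5-7) in simp)

lemma far_extension_gt:
  fixes n x y z r s t :: int
  assumes "\<bar>n\<bar> \<le> x" and "0 < x" and "x < y" and "4 \<le> y" and "x + y \<le> z"
    and "0 \<le> r" and "0 \<le> s" and "0 \<le> t"
    and "r\<^sup>2 = x * y + n" and "s\<^sup>2 = x * z + n" and "t\<^sup>2 = y * z + n"
    and far: "4 * r * s * t < x * (z - x - y)\<^sup>2"
  shows "5 * y < z"
proof (rule ccontr)
  assume "\<not> 5 * y < z"
  moreover have yz: "y < z" using assms(2,5) by simp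
  ultimately have "x * y * (z - y) \<le> r * s * t"
    using assms(1-4,6-11) by (intro root_product_ge gap_square_le) auto
  moreover have "x * (z - x - y)\<^sup>2 \<le> x * (z - y)\<^sup>2"
    using assms(2,5) by (intro mult_left_mono power_mono) auto
  ultimately have "x * (4 * y * (z - y)) < x * ((z - y) * (z - y))"
    using far by (simp add: power2_eq_square algebra_simps)
  then have "4 * y * (z - y) < (z - y) * (z - y)" using assms(2) by simp
  then have "4 * y < z - y" using yz by simp
  with \<open>\<not> 5 * y < z\<close> show False by simp
qed

lemma regular_or_far_extension:
  fixes n x y z r s t :: int
  assumes "n \<noteq> 0" and "n\<^sup>2 \<le> x" and "x < y" and "y < z"
    and "0 \<le> r" and "0 \<le> s" and "0 \<le> t"
    and r: "r\<^sup>2 = x * y + n" and s: "s\<^sup>2 = x * z + n" and t: "t\<^sup>2 = y * z + n"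
  shows "z = x + y + 2 * r \<or> (x + y \<le> z \<and> 4 * r * s * t < x * (z - x - y)\<^sup>2)"
proof -
  have x: "0 < x" using assms(1,2) by (smt (verit) zero_less_power2)
  have "x \<le> r"
    using shifted_product_root_ge [OF x _ assms(3) abs_le_of_power2_le [OF assms(1,2)] assms(5) r] by simp
  then have z_gt: "- (2 * r) < z - x - y" using x assms(4) by linarith
  let ?e = "triple_defect n x y z r s t"
  have "0 \<le> ?e" using triple_defect_nonneg [OF r s t] assms(2,3) by simp
  then consider "?e = 0" | "0 < ?e" by linarith
  then show ?thesis
  proof cases
    case 1
    then have "z - x - y = 2 * r \<or> z - x - y = - (2 * r)"
      using triple_defect_eq_0 [OF r s t assms(1)] power2_eq_iff by blast
    then show ?thesis using z_gt by auto
  next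
    case 2
    have far: "4 * r * s * t < n\<^sup>2 * ((z - x - y)\<^sup>2 - 4 * r\<^sup>2)"
      using triple_defect_pos [OF r s t 2] assms(5-7) by simp
    moreover have "0 \<le> 4 * r * s * t" using assms(5-7) by simp
    ultimately have "0 < n\<^sup>2 * ((z - x - y)\<^sup>2 - 4 * r\<^sup>2)" by linarith
    then have "0 < (z - x - y)\<^sup>2 - 4 * r\<^sup>2"
      by (rule zero_less_mult_pos) (use assms(1) in simp)
    then have "(2 * r)\<^sup>2 < (z - x - y)\<^sup>2" by (simp add: power_mult_distrib)
    then have "2 * r < \<bar>z - x - y\<bar>"
      using power2_less_imp_less [of "2 * r" "\<bar>z - x - y\<bar>"] by simp
    then have "x + y \<le> z" using z_gt assms(5) by linarith
    moreover have "n\<^sup>2 * ((z - x - y)\<^sup>2 - 4 * r\<^sup>2) \<le> x * (z - x - y)\<^sup>2"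
    proof -
      have "n\<^sup>2 * ((z - x - y)\<^sup>2 - 4 * r\<^sup>2) \<le> n\<^sup>2 * (z - x - y)\<^sup>2" by (simp add: algebra_simps)
      also have "\<dots> \<le> x * (z - x - y)\<^sup>2" using assms(2) by (intro mult_right_mono) simp_all
      finally show ?thesis .
    qed
    ultimately show ?thesis using far by simp
  qed
qed

lemma D_triple_regular_or_far:
  fixes n x y z :: int
  assumes D: "has_property_D n {x, y, z}" and "n \<noteq> 0" and "n\<^sup>2 \<le> x"
    and "x < y" and "y < z" and "4 \<le> y"
  shows "(\<exists>r \<ge> x. r\<^sup>2 = x * y + n \<and> z = x + y + 2 * r) \<or> 5 * y < z"
proof -
  obtain r where r: "0 \<le> r" "r\<^sup>2 = x * y + n" using has_property_D_root [OF D, of x y] assms(4) by auto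
  obtain s where s: "0 \<le> s" "s\<^sup>2 = x * z + n" using has_property_D_root [OF D, of x z] assms(4,5) by auto
  obtain t where t: "0 \<le> t" "t\<^sup>2 = y * z + n" using has_property_D_root [OF D, of y z] assms(5) by auto
  have x: "0 < x" using assms(2,3) by (smt (verit) zero_less_power2)
  have nx: "\<bar>n\<bar> \<le> x" using abs_le_of_power2_le assms(2,3) .
  have "x \<le> r" using shifted_product_root_ge [OF x _ assms(4) nx r] by simp
  then show ?thesis
    using regular_or_far_extension [OF assms(2-5) r(1) s(1) t(1) r(2) s(2) t(2)]
      far_extension_gt [OF nx x assms(4,6) _ r(1) s(1) t(1) r(2) s(2) t(2)] r by blast
qed

theorem lemma5:
  fixes n a b c d :: int
  assumes "\<bar>n\<bar> \<noteq> 1" and "n \<noteq> 0"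
    and "has_property_D n {a, b, c, d}"
    and "n ^ 2 \<le> a" and "a < b" and "b < c" and "c < d"
  shows "real_of_int c > 3.88 * real_of_int a \<and> real_of_int d > 4.89 * real_of_int c"
proof -
  have D: "has_property_D n S" if "S \<subseteq> {a, b, c, d}" for S
    using has_property_D_subset [OF assms(3) that] .
  have "2 \<le> \<bar>n\<bar>" using assms(1,2) by linarith
  then have "4 \<le> n\<^sup>2" using power_mono [of 2 "\<bar>n\<bar>" 2] by simp
  then have a4: "4 \<le> a" using assms(4) by simp
  have c4a: "4 * a < c"
    using D_triple_regular_or_far [OF D [of "{a, b, c}"] assms(2,4-6)] a4 assms(5) by auto
  have d5c: "5 * c < d"
  proof (rule ccontr)
    assume "\<not> 5 * c < d"
    then obtain s t where "a \<le> s" "s\<^sup>2 = a * c + n" "d = a + c + 2 * s"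
      and "b \<le> t" "t\<^sup>2 = b * c + n" "d = b + c + 2 * t"
      using D_triple_regular_or_far [OF D [of "{a, c, d}"] assms(2,4) _ assms(7)]
        D_triple_regular_or_far [OF D [of "{b, c, d}"] assms(2) _ assms(6,7)]
        a4 assms(4-6) by force
    moreover from this have "s\<^sup>2 < t\<^sup>2" using a4 assms(5,6) by simp
    ultimately show False using power_less_imp_less_base [of s 2 t] a4 assms(5) by simp
  qed
  have "real_of_int (4 * a) < real_of_int c" "real_of_int (5 * c) < real_of_int d"
    using c4a d5c by (simp_all only: of_int_less_iff)
  moreover have "0 < real_of_int a" using a4 by simp
  ultimately show ?thesis by simp
qed

end
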